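(* Let $a\in\mathbb{C}$ with $|a-\tfrac14|<\tfrac14$, and let $\varphi(z)=az^2+(1-2a)z+a$. Then the iterates $\varphi_n$ converge to the constant $1$ uniformly on all of $\mathbb{D}$, i.e. $\lim_{n\to\infty}\sup_{z\in\mathbb{D}}|\varphi_n(z)-1|=0$.
   Context: $\mathbb{D}$ is the open unit disk. $\varphi_n$ denotes the $n$-th iterate $\varphi\circ\cdots\circ\varphi$ ($n$ times). Such $\varphi$ is an analytic self-map of $\mathbb{D}$ with $\varphi(1)=1$, $\varphi'(1)=1$. *)

theory Defs
  imports "HOL-Analysis.Analysis"
begin

end

theory Submission
  imports Defs
begin

text \<open>
  The map \<open>V z = 1 / (1 - z)\<close> sends the unit disk onto the half-plane \<open>Re w > 1/2\<close>, and
  \<open>|z - 1| \<le> 1 / Re (V z)\<close>. Writing \<open>1 - \<phi> z = a (1 - z) (c + z)\<close> with \<open>c = 1/a - 1\<close>,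
  partial fractions give \<open>V (\<phi> z) = V z + 1 / (c + z)\<close>. The hypothesis on \<open>a\<close> means
  \<open>Re c > 1\<close>, so \<open>Re (1 / (c + z)) \<ge> d > 0\<close> uniformly on the disk. Hence
  \<open>Re (V (\<phi>\<^sub>n z)) \<ge> 1/2 + n d\<close> and \<open>|\<phi>\<^sub>n z - 1| \<le> 1 / (1/2 + n d)\<close> for all \<open>z\<close> in the disk.
\<close>

lemma Re_one_divide: "Re (1 / w) = Re w / (cmod w)\<^sup>2"
  by (simp add: Re_divide cmod_power2)

lemma norm_less_one_iff_Re_inverse_one_minus:
  fixes z :: complex
  assumes "z \<noteq> 1"
  shows "cmod z < 1 \<longleftrightarrow> 1/2 < Re (1 / (1 - z))"
proof -
  have pos: "0 < (cmod (1 - z))\<^sup>2"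
    using assms by simp
  have "cmod z < 1 \<longleftrightarrow> (Re z)\<^sup>2 + (Im z)\<^sup>2 < 1"
    by (simp add: cmod_def)
  also have "\<dots> \<longleftrightarrow> (cmod (1 - z))\<^sup>2 < 2 * (1 - Re z)"
    unfolding cmod_power2 by (simp add: power2_eq_square algebra_simps)
  also have "\<dots> \<longleftrightarrow> 1/2 < Re (1 / (1 - z))"
    using pos by (simp add: Re_one_divide less_divide_eq mult.commute)
  finally show ?thesis .
qed

lemma norm_sub_one_le_inverse_Re:
  fixes z :: complex
  assumes "0 < r" and "r \<le> Re (1 / (1 - z))"
  shows "cmod (z - 1) \<le> 1 / r"
proof -
  have "r \<le> cmod (1 / (1 - z))"
    using assms(2) complex_Re_le_cmod order_trans by blast
  moreover from this assms(1) have "0 < cmod (1 - z)"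
    by auto
  ultimately show ?thesis
    using assms(1) by (simp add: norm_divide norm_minus_commute field_simps)
qed

lemma Re_inverse_gt_if_in_disk:
  fixes a :: complex
  assumes "cmod (a - of_real r) < r"
  shows "1 / (2 * r) < Re (1 / a)"
proof -
  have "(cmod (a - of_real r))\<^sup>2 < r\<^sup>2"
    using assms by (simp add: power_strict_mono)
  then have disk: "(cmod a)\<^sup>2 < 2 * r * Re a"
    unfolding cmod_power2 by (simp add: power2_eq_square algebra_simps)
  have "0 < r"
    using assms norm_ge_zero[of "a - of_real r"] by linarith
  have "0 < (2 * r) * Re a"
    using disk zero_le_power2[of "cmod a"] by linarith
  with \<open>0 < r\<close> have "0 < Re a"
    by (simp add: zero_less_mult_iff)
  then have "0 < (cmod a)\<^sup>2"
    by auto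
  with disk \<open>0 < r\<close> show ?thesis
    by (simp add: Re_one_divide divide_less_eq less_divide_eq mult.commute)
qed

lemma Re_inverse_add_ge:
  fixes c z :: complex
  assumes "1 < Re c" and "cmod z < 1"
  shows "(Re c - 1) / (cmod c + 1)\<^sup>2 \<le> Re (1 / (c + z))"
proof -
  have Re_ge: "Re c - 1 \<le> Re (c + z)"
    using abs_Re_le_cmod[of z] assms(2) by simp
  with assms(1) have "0 < Re (c + z)"
    by linarith
  then have "c + z \<noteq> 0"
    by (metis order_less_irrefl zero_complex.sel(1))
  then have "0 < cmod (c + z)"
    by simp
  moreover have "cmod (c + z) \<le> cmod c + 1"
    using norm_triangle_ineq[of c z] assms(2) by linarith
  ultimately have "(Re c - 1) / (cmod c + 1)\<^sup>2 \<le> Re (c + z) / (cmod (c + z))\<^sup>2"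
    using assms(1) Re_ge by (intro frac_le) (auto intro: power_mono)
  then show ?thesis
    by (simp add: Re_one_divide)
qed

lemma inverse_one_minus_quadratic:
  fixes a z :: complex
  assumes "a \<noteq> 0" and "z \<noteq> 1" and "1/a - 1 + z \<noteq> 0"
  shows "1 / (1 - (a * z\<^sup>2 + (1 - 2*a) * z + a)) = 1 / (1 - z) + 1 / (1/a - 1 + z)"
proof -
  have shifted: "1/a - 1 + z = (1 - a + a*z) / a"
    using assms(1) by (simp add: field_simps)
  with assms have "1 - a + a*z \<noteq> 0"
    by simp
  moreover have "1 - (a * z\<^sup>2 + (1 - 2*a) * z + a) = (1 - z) * (1 - a + a*z)"
    by (simp add: algebra_simps power2_eq_square)
  ultimately show ?thesis
    using assms(1,2) unfolding shifted by (simp add: field_simps)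
qed

lemma uniform_limit_of_dist_le:
  assumes "\<And>n x. x \<in> S \<Longrightarrow> dist (f n x) (l x) \<le> b n" and "b \<longlonglongrightarrow> 0"
  shows "uniform_limit S f l sequentially"
  unfolding uniform_limit_iff
proof (intro allI impI)
  fix e :: real
  assume "0 < e"
  with assms(2) have "\<forall>\<^sub>F n in sequentially. b n < e"
    by (simp add: order_tendstoD(2))
  then show "\<forall>\<^sub>F n in sequentially. \<forall>x\<in>S. dist (f n x) (l x) < e"
    by eventually_elim (use assms(1) le_less_trans in blast)
qed

text \<open>
  A self-map of the plane whose potential \<open>Re (1 / (1 - z))\<close> increases by at least \<open>d\<close> at each
  point of the disk maps the disk into itself, since the potential is \<open>> 1/2\<close> exactly there.
\<close>

lemma uniform_limit_iterates_to_one: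
  fixes f :: "complex \<Rightarrow> complex"
  assumes "0 < d"
    and increment: "\<And>z. cmod z < 1 \<Longrightarrow> Re (1 / (1 - z)) + d \<le> Re (1 / (1 - f z))"
  shows "uniform_limit (ball 0 1) (\<lambda>n. f ^^ n) (\<lambda>_. 1) sequentially"
proof -
  have orbit: "cmod ((f ^^ n) z) < 1 \<and> 1/2 + real n * d \<le> Re (1 / (1 - (f ^^ n) z))"
    if "cmod z < 1" for n z
  proof (induction n)
    case 0
    from that have "z \<noteq> 1"
      by auto
    with that show ?case
      using norm_less_one_iff_Re_inverse_one_minus[of z] by simp
  next
    case (Suc n)
    let ?w = "(f ^^ n) z"
    have potential: "1/2 + real (Suc n) * d \<le> Re (1 / (1 - f ?w))"
      using Suc increment[of ?w] by (simp add: algebra_simps)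
    moreover have "1/2 < 1/2 + real (Suc n) * d"
      using \<open>0 < d\<close> by simp
    ultimately have "1/2 < Re (1 / (1 - f ?w))"
      by linarith
    moreover from this have "f ?w \<noteq> 1"
      by auto
    ultimately show ?case
      using potential norm_less_one_iff_Re_inverse_one_minus[of "f ?w"] by simp
  qed
  show ?thesis
  proof (rule uniform_limit_of_dist_le)
    show "dist ((f ^^ n) z) 1 \<le> 1 / (1/2 + real n * d)" if "z \<in> ball 0 1" for n z
      using that orbit[of z n] \<open>0 < d\<close>
      by (simp add: dist_norm add_pos_nonneg norm_sub_one_le_inverse_Re)
    show "(\<lambda>n. 1 / (1/2 + real n * d)) \<longlonglongrightarrow> 0"
      using \<open>0 < d\<close>
      by (intro tendsto_divide_0[OF tendsto_const] filterlim_at_top_imp_at_infinity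
          filterlim_tendsto_add_at_top[OF tendsto_const]
          filterlim_at_top_mult_tendsto_pos[OF tendsto_const] filterlim_real_sequentially)
  qed
qed

theorem mainTheorem3:
  fixes a :: complex
  assumes "cmod (a - 1/4) < 1/4"
  shows "uniform_limit (ball 0 1)
           (\<lambda>n. ((\<lambda>z. a * z^2 + (1 - 2*a) * z + a) ^^ n))
           (\<lambda>_. 1) sequentially"
proof (rule uniform_limit_iterates_to_one)
  define c where "c = 1/a - 1"
  define d where "d = (Re c - 1) / (cmod c + 1)\<^sup>2"
  have "2 < Re (1 / a)"
    using Re_inverse_gt_if_in_disk[of a "1/4"] assms by simp
  then have "a \<noteq> 0" and "1 < Re c"
    by (auto simp: c_def)
  moreover have "0 < cmod c + 1"
    by (simp add: add_nonneg_pos)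
  ultimately show "0 < d"
    by (simp add: d_def)
  fix z :: complex
  assume z: "cmod z < 1"
  have "d \<le> Re (1 / (c + z))"
    using Re_inverse_add_ge[OF \<open>1 < Re c\<close> z] by (simp add: d_def)
  with \<open>0 < d\<close> have "c + z \<noteq> 0"
    by auto
  moreover have "z \<noteq> 1"
    using z by auto
  ultimately have "1 / (1 - (a * z^2 + (1 - 2*a) * z + a)) = 1 / (1 - z) + 1 / (c + z)"
    using inverse_one_minus_quadratic[OF \<open>a \<noteq> 0\<close>] by (simp add: c_def)
  with \<open>d \<le> Re (1 / (c + z))\<close>
  show "Re (1 / (1 - z)) + d \<le> Re (1 / (1 - (a * z^2 + (1 - 2*a) * z + a)))"
    by simp
qed

end
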